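(* Let $f(\mathbf z)$ be a weighted homogeneous polynomial in $\mathbf z=(z_1,\dots,z_n)$ with strictly positive weight vector $R=(r_1,\dots,r_n)$ and degree $d(R)>0$, which is non-degenerate, Łojasiewicz non-degenerate, has an isolated singularity at the origin, and satisfies $\dim\Gamma(f)=n-1$. Then $\ell_0(f)\le\eta(R)=d(R)/\min_ir_i-1$.
   Context: $f$ is weighted homogeneous with weight $R$ and degree $d(R)$ if every monomial $\mathbf z^\nu$ with non-zero coefficient satisfies $\sum_ir_i\nu_i=d(R)$. $\Gamma_+(g)$ is the convex hull of $\bigcup_{c_\nu\ne0}(\nu+\mathbb R_{\ge0}^n)$ for $g=\sum c_\nu\mathbf z^\nu$; $\Gamma(g)$ is the union of compact faces. For a weight $P$, $g_P$ is the sum of terms of $g$ whose exponents lie on the face of $\Gamma_+(g)$ where $\nu\mapsto\sum p_i\nu_i$ is minimal. $f$ is non-degenerate if for each strictly positive $P$, $f_P$ has no critical point in $(\mathbb C^* )^n$. $\ell_0(f)$ is the infimum of $\theta>0$ with $\|\partial f(\mathbf z)\|\ge c\|\mathbf z\|^\theta$ near $\mathbf 0$ for some $c>0$, $\partial f=(f_1,\dots,f_n)$, $f_i=\partial f/\partial z_i$. Łojasiewicz non-degeneracy: for $I\subset\{1,\dots,n\}$ with $f|_{\mathbb C^I}\equiv0$, where $\mathbb C^I=\{\mathbf z:z_k=0,\ k\notin I\}$ (a vanishing coordinate subspace), and $i\in I$, let $J_i$ be the set of $j\notin I$ such that some monomial $z_i^az_j$ ($a\ge1$) has a non-zero coefficient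 in $f$. $f$ is Łojasiewicz non-degenerate if for every vanishing coordinate subspace $\mathbb C^I$, every $P=(p_i)_{i\in I}$ with all $p_i>0$, and every $\mathbf a\in(\mathbb C^* )^I$, there is $j\in\bigcup_{i\in I'}J_i$, $I'=\{i\in I:p_i=\min_{k\in I}p_k\}$, with $((f_j)^I)_P(\mathbf a)\ne0$; here $(f_j)^I$ is the restriction of $f_j$ to $\mathbb C^I$ as a polynomial in $(z_i)_{i\in I}$ and $(\cdot)_P$ its face function with respect to $P$. *)

theory Defs
  imports "HOL-Analysis.Analysis"
begin

text \<open>Polynomials in the variables z_i, i in the finite index type 'n (so n = CARD('n)),
  with complex coefficients, are represented by their coefficient function on exponent
  vectors nu :: 'n => nat.\<close>

type_synonym 'n cpoly = "('n \<Rightarrow> nat) \<Rightarrow> complex"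

definition supp_poly :: "'n cpoly \<Rightarrow> ('n \<Rightarrow> nat) set" where
  "supp_poly g = {\<nu>. g \<nu> \<noteq> 0}"

definition is_poly :: "'n cpoly \<Rightarrow> bool" where
  "is_poly g \<longleftrightarrow> finite (supp_poly g)"

definition peval :: "('n::finite) cpoly \<Rightarrow> complex^'n \<Rightarrow> complex" where
  "peval g z = (\<Sum>\<nu>\<in>supp_poly g. g \<nu> * (\<Prod>i\<in>UNIV. (z$i) ^ (\<nu> i)))"

definition pderiv_poly :: "'n \<Rightarrow> 'n cpoly \<Rightarrow> 'n cpoly" where
  "pderiv_poly i g = (\<lambda>\<nu>. of_nat (\<nu> i + 1) * g (\<nu>(i := \<nu> i + 1)))"

definition grad :: "('n::finite) cpoly \<Rightarrow> complex^'n \<Rightarrow> complex^'n" where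
  "grad g z = (\<chi> i. peval (pderiv_poly i g) z)"

definition weighted_homogeneous :: "('n::finite) cpoly \<Rightarrow> ('n \<Rightarrow> real) \<Rightarrow> real \<Rightarrow> bool" where
  "weighted_homogeneous g r d \<longleftrightarrow>
     (\<forall>\<nu>\<in>supp_poly g. (\<Sum>i\<in>UNIV. r i * real (\<nu> i)) = d)"

text \<open>Newton polyhedron Gamma_+ of a polynomial g in the variables indexed by I,
  realised inside the coordinate subspace R^I of R^n (for I = UNIV this is the usual one).\<close>
definition newton_plus :: "'n set \<Rightarrow> ('n::finite) cpoly \<Rightarrow> (real^'n) set" where
  "newton_plus I g = convex hull
     (\<Union>\<nu>\<in>supp_poly g. {x. (\<forall>i\<in>I. real (\<nu> i) \<le> x$i) \<and> (\<forall>k. k \<notin> I \<longrightarrow> x$k = 0)})"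

text \<open>Face function g_P: the terms of g whose exponents lie on the face of Gamma_+(g)
  on which the linear function x |-> sum p_i x_i (i in I) is minimal.\<close>
definition face_fun :: "'n set \<Rightarrow> ('n \<Rightarrow> real) \<Rightarrow> ('n::finite) cpoly \<Rightarrow> 'n cpoly" where
  "face_fun I P g = (\<lambda>\<nu>. if \<nu> \<in> supp_poly g \<and>
        (\<forall>x\<in>newton_plus I g. (\<Sum>i\<in>I. P i * real (\<nu> i)) \<le> (\<Sum>i\<in>I. P i * x$i))
      then g \<nu> else 0)"

definition newton_boundary :: "('n::finite) cpoly \<Rightarrow> (real^'n) set" where
  "newton_boundary g = \<Union>{F. F face_of newton_plus UNIV g \<and> compact F}"

definition newton_boundary_dim :: "('n::finite) cpoly \<Rightarrow> int" where
  "newton_boundary_dim g =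
     Max {aff_dim F | F. F face_of newton_plus UNIV g \<and> compact F \<and> F \<noteq> {}}"

definition nondegenerate :: "('n::finite) cpoly \<Rightarrow> bool" where
  "nondegenerate f \<longleftrightarrow>
     (\<forall>P. (\<forall>i. P i > 0) \<longrightarrow>
        \<not> (\<exists>z::complex^'n. (\<forall>i. z$i \<noteq> 0) \<and> grad (face_fun UNIV P f) z = 0))"

definition restrict_poly :: "'n set \<Rightarrow> 'n cpoly \<Rightarrow> 'n cpoly" where
  "restrict_poly I g = (\<lambda>\<nu>. if \<forall>k. k \<notin> I \<longrightarrow> \<nu> k = 0 then g \<nu> else 0)"

definition vanishing_coord_subspace :: "('n::finite) cpoly \<Rightarrow> 'n set \<Rightarrow> bool" where
  "vanishing_coord_subspace f I \<longleftrightarrow>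
     I \<noteq> {} \<and> (\<forall>z::complex^'n. (\<forall>k. k \<notin> I \<longrightarrow> z$k = 0) \<longrightarrow> peval f z = 0)"

definition J_set :: "'n cpoly \<Rightarrow> 'n set \<Rightarrow> 'n \<Rightarrow> 'n set" where
  "J_set f I i = {j. j \<notin> I \<and> (\<exists>a::nat. a \<ge> 1 \<and>
      f (\<lambda>k. if k = i then a else if k = j then 1 else 0) \<noteq> 0)}"

definition loj_nondegenerate :: "('n::finite) cpoly \<Rightarrow> bool" where
  "loj_nondegenerate f \<longleftrightarrow>
     (\<forall>I. vanishing_coord_subspace f I \<longrightarrow>
       (\<forall>P::'n \<Rightarrow> real. (\<forall>i\<in>I. P i > 0) \<longrightarrow>
         (\<forall>a::complex^'n. (\<forall>i\<in>I. a$i \<noteq> 0) \<and> (\<forall>k. k \<notin> I \<longrightarrow> a$k = 0) \<longrightarrow>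
           (\<exists>j\<in>(\<Union>i\<in>{i\<in>I. P i = Min (P ` I)}. J_set f I i).
              peval (face_fun I P (restrict_poly I (pderiv_poly j f))) a \<noteq> 0))))"

definition isolated_singularity_origin :: "('n::finite) cpoly \<Rightarrow> bool" where
  "isolated_singularity_origin f \<longleftrightarrow>
     (\<exists>\<epsilon>>0. \<forall>z::complex^'n. norm z < \<epsilon> \<and> grad f z = 0 \<longrightarrow> z = 0)"

definition loj_exponent :: "('n::finite) cpoly \<Rightarrow> real" where
  "loj_exponent f = Inf {\<theta>. \<theta> > 0 \<and> (\<exists>c>0. \<exists>\<epsilon>>0. \<forall>z::complex^'n.
       norm z < \<epsilon> \<longrightarrow> norm (grad f z) \<ge> c * norm z powr \<theta>)}"

end

theory Submission
  imports Defs
begin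

text \<open>Every
  z \<noteq> 0 near the origin is z = t\<cdot>w := (t^r_1 w_1, \<dots>, t^r_n w_n) with 0 < t \<le> 1 and w on
  the boundary of the unit polydisc.  The partial derivative f_i is weighted homogeneous of
  degree d - r_i, so \<parallel>\<partial>f(z)\<parallel> \<ge> t^(d - min r) \<parallel>\<partial>f(w)\<parallel>, while \<parallel>z\<parallel> \<le> n t^(min r).  The
  polydisc boundary is compact and, by homogeneity, free of critical points, so \<parallel>\<partial>f\<parallel>
  has a positive minimum m there, giving \<parallel>\<partial>f(z)\<parallel> \<ge> m (\<parallel>z\<parallel>/n)^(d/min r - 1).\<close>

definition weighted_scale :: "('n::finite \<Rightarrow> real) \<Rightarrow> real \<Rightarrow> complex^'n \<Rightarrow> complex^'n" where
  "weighted_scale r t w = (\<chi> j. complex_of_real (t powr r j) * w$j)"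

definition polydisc_boundary :: "(complex^'n::finite) set" where
  "polydisc_boundary = {w. (\<forall>j. cmod (w$j) \<le> 1) \<and> (\<exists>j. cmod (w$j) = 1)}"

lemma Min_range_weights:
  fixes r :: "'n::finite \<Rightarrow> real"
  assumes "\<forall>i. r i > 0"
  shows "Min (range r) > 0" "\<And>i. Min (range r) \<le> r i"
proof -
  have "Min (range r) \<in> range r" by (rule Min_in) auto
  then show "Min (range r) > 0" using assms by auto
  show "\<And>i. Min (range r) \<le> r i" by (rule Min_le) auto
qed

lemma norm_le_card_mult:
  fixes w :: "'a::real_normed_vector^'n::finite"
  assumes "\<And>j. norm (w$j) \<le> B"
  shows "norm w \<le> real CARD('n) * B"
proof -
  have "norm w \<le> (\<Sum>j\<in>UNIV. norm (w $ j))"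
    unfolding norm_vec_def by (rule L2_set_le_sum) auto
  also have "\<dots> \<le> (\<Sum>j\<in>(UNIV::'n set). B)"
    by (rule sum_mono) (use assms in auto)
  finally show ?thesis by simp
qed

lemma weighted_homogeneous_pderiv:
  assumes "weighted_homogeneous f r d"
  shows "weighted_homogeneous (pderiv_poly i f) r (d - r i)"
  unfolding weighted_homogeneous_def
proof
  fix \<nu> assume "\<nu> \<in> supp_poly (pderiv_poly i f)"
  then have "f (\<nu>(i := \<nu> i + 1)) \<noteq> 0" by (simp add: supp_poly_def pderiv_poly_def)
  then have "(\<Sum>j\<in>UNIV. r j * real ((\<nu>(i := \<nu> i + 1)) j)) = d"
    using assms by (auto simp: weighted_homogeneous_def supp_poly_def)
  moreover have "(\<Sum>j\<in>UNIV. r j * real ((\<nu>(i := \<nu> i + 1)) j))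
      = (\<Sum>j\<in>UNIV. r j * real (\<nu> j) + (if j = i then r i else 0))"
    by (rule sum.cong) (auto simp: algebra_simps)
  ultimately show "(\<Sum>j\<in>UNIV. r j * real (\<nu> j)) = d - r i"
    by (simp add: sum.distrib)
qed

lemma weighted_homogeneous_degree_nonneg:
  assumes "weighted_homogeneous g r e" "\<forall>i. r i \<ge> 0" "peval g w \<noteq> 0"
  shows "e \<ge> 0"
proof -
  obtain \<nu> where "\<nu> \<in> supp_poly g"
    using assms(3) unfolding peval_def by (meson sum.neutral)
  then have "e = (\<Sum>i\<in>UNIV. r i * real (\<nu> i))"
    using assms(1) by (simp add: weighted_homogeneous_def)
  also have "\<dots> \<ge> 0" using assms(2) by (intro sum_nonneg) simp
  finally show ?thesis .
qed

lemma peval_weighted_scale: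
  fixes g :: "('n::finite) cpoly"
  assumes "weighted_homogeneous g r e" "t > 0"
  shows "peval g (weighted_scale r t w) = complex_of_real (t powr e) * peval g w"
  unfolding peval_def sum_distrib_left
proof (rule sum.cong[OF refl])
  fix \<nu> assume \<nu>: "\<nu> \<in> supp_poly g"
  have "(\<Prod>i\<in>UNIV. complex_of_real (t powr r i) ^ \<nu> i)
      = complex_of_real (\<Prod>i\<in>UNIV. t powr (r i * real (\<nu> i)))"
    unfolding of_real_prod
    by (rule prod.cong[OF refl]) (use assms(2) in \<open>simp add: powr_power mult.commute flip: of_real_power\<close>)
  also have "\<dots> = complex_of_real (t powr (\<Sum>i\<in>UNIV. r i * real (\<nu> i)))"
    using assms(2) by (simp add: powr_sum)
  also have "\<dots> = complex_of_real (t powr e)"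
    using assms(1) \<nu> by (simp add: weighted_homogeneous_def)
  finally show "g \<nu> * (\<Prod>i\<in>UNIV. (weighted_scale r t w $ i) ^ \<nu> i)
      = complex_of_real (t powr e) * (g \<nu> * (\<Prod>i\<in>UNIV. (w $ i) ^ \<nu> i))"
    by (simp add: weighted_scale_def power_mult_distrib prod.distrib)
qed

lemma grad_weighted_scale_nth:
  assumes "weighted_homogeneous f r d" "t > 0"
  shows "grad f (weighted_scale r t w) $ i = complex_of_real (t powr (d - r i)) * (grad f w $ i)"
  unfolding grad_def
  using peval_weighted_scale[OF weighted_homogeneous_pderiv[OF assms(1)] assms(2)] by simp

lemma norm_grad_weighted_scale_ge:
  assumes "weighted_homogeneous f r d" "\<forall>i. r i > 0" "0 < t" "t \<le> 1"
  shows "t powr (d - Min (range r)) * norm (grad f w) \<le> norm (grad f (weighted_scale r t w))"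
proof -
  have "t powr (d - Min (range r)) * norm (grad f w)
      = L2_set (\<lambda>i. t powr (d - Min (range r)) * norm (grad f w $ i)) UNIV"
    unfolding norm_vec_def by (rule L2_set_right_distrib) simp
  also have "\<dots> \<le> L2_set (\<lambda>i. norm (grad f (weighted_scale r t w) $ i)) UNIV"
  proof (rule L2_set_mono)
    fix i
    have "t powr (d - Min (range r)) \<le> t powr (d - r i)"
      using Min_range_weights[OF assms(2)] assms(3,4) by (intro powr_mono') auto
    then show "t powr (d - Min (range r)) * norm (grad f w $ i)
        \<le> norm (grad f (weighted_scale r t w) $ i)"
      by (simp add: grad_weighted_scale_nth[OF assms(1,3)] norm_mult mult_right_mono)
  qed simp
  finally show ?thesis by (simp add: norm_vec_def)
qed

lemma norm_weighted_scale_le: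
  fixes r :: "'n::finite \<Rightarrow> real"
  assumes "\<forall>i. r i > 0" "0 < t" "t \<le> 1" "w \<in> polydisc_boundary"
  shows "norm (weighted_scale r t w) \<le> real CARD('n) * t powr Min (range r)"
proof (rule norm_le_card_mult)
  fix j
  have "norm (weighted_scale r t w $ j) = t powr r j * cmod (w$j)"
    by (simp add: weighted_scale_def norm_mult)
  also have "\<dots> \<le> t powr r j"
    using assms(4) by (simp add: polydisc_boundary_def mult_left_le)
  also have "\<dots> \<le> t powr Min (range r)"
    using Min_range_weights[OF assms(1)] assms(2,3) by (intro powr_mono') auto
  finally show "norm (weighted_scale r t w $ j) \<le> t powr Min (range r)" .
qed

lemma weighted_scale_eq_0_iff:
  assumes "t > 0"
  shows "weighted_scale r t w = 0 \<longleftrightarrow> w = 0"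
  using assms by (simp add: weighted_scale_def vec_eq_iff)

lemma weighted_polar_decomposition:
  fixes z :: "complex^'n::finite"
  assumes r: "\<forall>i. r i > 0" and "z \<noteq> 0" "norm z < 1"
  obtains t w where "0 < t" "t \<le> 1" "w \<in> polydisc_boundary" "z = weighted_scale r t w"
proof -
  define t where "t = Max (range (\<lambda>j. cmod (z$j) powr (1 / r j)))"
  have root_inv: "(x powr (1 / r j)) powr r j = x" if "x \<ge> 0" for x j
    using that r[rule_format, of j] by (simp add: powr_powr)
  have "t \<in> range (\<lambda>j. cmod (z$j) powr (1 / r j))"
    unfolding t_def by (rule Max_in) auto
  then obtain j0 where j0: "t = cmod (z$j0) powr (1 / r j0)" by blast
  have t_ge: "cmod (z$j) powr (1 / r j) \<le> t" for j
    unfolding t_def by (rule Max_ge) auto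
  obtain j1 where "z $ j1 \<noteq> 0" using \<open>z \<noteq> 0\<close> by (auto simp: vec_eq_iff)
  with t_ge[of j1] have t_pos: "t > 0" by (smt (verit) powr_gt_zero zero_less_norm_iff)
  have "cmod (z$j0) < 1" using \<open>norm z < 1\<close> Finite_Cartesian_Product.norm_nth_le[of z j0] by linarith
  then have "t \<le> 1" using j0 r by (simp add: powr_le1 less_imp_le)
  have z_le: "cmod (z$j) \<le> t powr r j" for j
    using powr_mono2[OF _ _ t_ge[of j], of "r j"] r root_inv[of "cmod (z$j)" j]
    by (simp add: less_imp_le)
  have z_eq: "cmod (z$j0) = t powr r j0" using j0 root_inv by simp
  define w where "w = (\<chi> j. z$j / complex_of_real (t powr r j))"
  have w_nth: "cmod (w$j) = cmod (z$j) / t powr r j" for j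
    unfolding w_def using t_pos by (simp add: norm_divide)
  have "cmod (w$j0) = 1" using w_nth z_eq t_pos by simp
  then have "w \<in> polydisc_boundary"
    unfolding polydisc_boundary_def using w_nth z_le t_pos by (auto simp: divide_le_eq_1)
  moreover have "z = weighted_scale r t w"
    unfolding weighted_scale_def w_def using t_pos by (simp add: vec_eq_iff)
  ultimately show ?thesis using that t_pos \<open>t \<le> 1\<close> by blast
qed

lemma compact_polydisc_boundary: "compact (polydisc_boundary :: (complex^'n::finite) set)"
proof (subst compact_eq_bounded_closed, intro conjI)
  show "bounded (polydisc_boundary :: (complex^'n) set)"
    by (rule boundedI, rule norm_le_card_mult) (auto simp: polydisc_boundary_def)
  have "closed {w::complex^'n. cmod (w$j) \<le> 1}" "closed {w::complex^'n. cmod (w$j) = 1}" for j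
    by (intro closed_Collect_le closed_Collect_eq continuous_on_norm continuous_on_component
        continuous_on_id continuous_on_const)+
  then have "closed ((\<Inter>j. {w::complex^'n. cmod (w$j) \<le> 1}) \<inter> (\<Union>j. {w. cmod (w$j) = 1}))"
    by (intro closed_Int closed_INT closed_UN) auto
  moreover have "(polydisc_boundary :: (complex^'n) set)
      = (\<Inter>j. {w. cmod (w$j) \<le> 1}) \<inter> (\<Union>j. {w. cmod (w$j) = 1})"
    unfolding polydisc_boundary_def by auto
  ultimately show "closed (polydisc_boundary :: (complex^'n) set)" by simp
qed

lemma polydisc_boundary_one: "(\<chi> j. 1) \<in> (polydisc_boundary :: (complex^'n::finite) set)"
  by (simp add: polydisc_boundary_def)

lemma continuous_on_norm_grad: "continuous_on S (\<lambda>w. norm (grad (f::('n::finite) cpoly) w))"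
  unfolding grad_def norm_vec_def L2_set_def peval_def
  by (intro continuous_intros)

lemma grad_nonzero_on_polydisc_boundary:
  fixes f :: "('n::finite) cpoly"
  assumes r: "\<forall>i. r i > 0" and wh: "weighted_homogeneous f r d"
    and iso: "isolated_singularity_origin f" and w: "w \<in> polydisc_boundary"
  shows "grad f w \<noteq> 0"
proof
  assume grad_0: "grad f w = 0"
  obtain \<epsilon> where \<epsilon>: "\<epsilon> > 0" "\<And>z::complex^'n. norm z < \<epsilon> \<Longrightarrow> grad f z = 0 \<Longrightarrow> z = 0"
    using iso unfolding isolated_singularity_origin_def by blast
  define rm N where "rm = Min (range r)" and "N = real CARD('n)"
  have rm: "rm > 0" and N: "N > 0"
    using Min_range_weights[OF r] by (auto simp: rm_def N_def)
  define t where "t = min 1 ((\<epsilon> / (2*N)) powr (1/rm))"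
  have t: "t > 0" "t \<le> 1" using \<epsilon> N by (auto simp: t_def)
  have "t powr rm \<le> ((\<epsilon> / (2*N)) powr (1/rm)) powr rm"
    by (rule powr_mono2) (use rm t in \<open>auto simp: t_def\<close>)
  also have "\<dots> = \<epsilon> / (2*N)" using rm \<epsilon> N by (simp add: powr_powr)
  finally have "N * t powr rm < \<epsilon>"
    using N \<epsilon> by (simp add: field_simps)
  then have "norm (weighted_scale r t w) < \<epsilon>"
    using norm_weighted_scale_le[OF r t w] by (simp add: N_def rm_def)
  moreover have "grad f (weighted_scale r t w) = 0"
    using grad_0 grad_weighted_scale_nth[OF wh t(1)] by (simp add: vec_eq_iff)
  ultimately have "w = 0"
    using \<epsilon>(2) weighted_scale_eq_0_iff[OF t(1)] by blast
  then show False using w by (simp add: polydisc_boundary_def)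
qed

lemma grad_lower_bound:
  fixes f :: "('n::finite) cpoly"
  assumes r: "\<forall>i. r i > 0" and wh: "weighted_homogeneous f r d"
    and iso: "isolated_singularity_origin f"
  shows "d / Min (range r) - 1 \<ge> 0"
    and "\<exists>c>0. \<forall>z::complex^'n. norm z < 1 \<longrightarrow>
           c * norm z powr (d / Min (range r) - 1) \<le> norm (grad f z)"
proof -
  define rm N \<eta> where "rm = Min (range r)" and "N = real CARD('n)" and "\<eta> = d / rm - 1"
  have rm: "rm > 0" "\<And>i. rm \<le> r i" and N: "N > 0"
    using Min_range_weights[OF r] by (auto simp: rm_def N_def)
  obtain w0 where w0: "w0 \<in> polydisc_boundary"
    and w0_min: "\<And>w. w \<in> polydisc_boundary \<Longrightarrow> norm (grad f w0) \<le> norm (grad f w)"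
    using continuous_attains_inf[OF compact_polydisc_boundary _ continuous_on_norm_grad]
      polydisc_boundary_one by blast
  define m where "m = norm (grad f w0)"
  have "grad f w0 \<noteq> 0" using grad_nonzero_on_polydisc_boundary[OF r wh iso w0] .
  then obtain i where "peval (pderiv_poly i f) w0 \<noteq> 0" and "m > 0"
    by (auto simp: vec_eq_iff grad_def m_def)
  then have "d - r i \<ge> 0"
    using weighted_homogeneous_degree_nonneg[OF weighted_homogeneous_pderiv[OF wh]] r
    by (simp add: less_imp_le)
  then have "rm \<le> d" using rm(2)[of i] by linarith
  then have \<eta>: "\<eta> \<ge> 0" using rm by (simp add: \<eta>_def field_simps)
  then show "d / Min (range r) - 1 \<ge> 0" by (simp add: \<eta>_def rm_def)
  have "m / N powr \<eta> * norm z powr \<eta> \<le> norm (grad f z)" if "norm z < 1" for z :: "complex^'n"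
  proof (cases "z = 0")
    case False
    then obtain t w where t: "0 < t" "t \<le> 1"
      and w: "w \<in> polydisc_boundary" and z: "z = weighted_scale r t w"
      using weighted_polar_decomposition[OF r _ \<open>norm z < 1\<close>] by blast
    have "norm z / N \<le> t powr rm"
      using norm_weighted_scale_le[OF r t w] N z by (simp add: N_def rm_def field_simps)
    then have "(norm z / N) powr \<eta> \<le> (t powr rm) powr \<eta>"
      using \<eta> N by (intro powr_mono2) auto
    also have "\<dots> = t powr (d - rm)"
    proof -
      have "rm * \<eta> = d - rm" using rm by (simp add: \<eta>_def field_simps)
      then show ?thesis by (simp add: powr_powr)
    qed
    finally have z_small: "(norm z / N) powr \<eta> \<le> t powr (d - rm)" .
    have "m / N powr \<eta> * norm z powr \<eta> = m * (norm z / N) powr \<eta>"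
      using N by (simp add: powr_divide)
    also have "\<dots> \<le> norm (grad f w) * t powr (d - rm)"
      using w0_min[OF w] z_small \<open>m > 0\<close> by (intro mult_mono) (auto simp: m_def)
    also have "\<dots> \<le> norm (grad f z)"
      using norm_grad_weighted_scale_ge[OF wh r t] z by (simp add: rm_def mult.commute)
    finally show ?thesis .
  qed simp
  then show "\<exists>c>0. \<forall>z::complex^'n. norm z < 1 \<longrightarrow>
      c * norm z powr (d / Min (range r) - 1) \<le> norm (grad f z)"
    using \<open>m > 0\<close> N by (auto simp: \<eta>_def rm_def intro!: exI[of _ "m / N powr \<eta>"])
qed

lemma loj_exponent_le:
  fixes f :: "('n::finite) cpoly"
  assumes "\<theta> \<ge> 0" "c > 0" "\<epsilon> > 0"
    and bound: "\<forall>z::complex^'n. norm z < \<epsilon> \<longrightarrow> c * norm z powr \<theta> \<le> norm (grad f z)"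
  shows "loj_exponent f \<le> \<theta>"
proof (rule field_le_epsilon)
  fix e :: real assume "e > 0"
  \<comment> \<open>on norms below 1, raising the exponent only weakens the bound\<close>
  define \<epsilon>' where "\<epsilon>' = min \<epsilon> 1"
  have "\<forall>z::complex^'n. norm z < \<epsilon>' \<longrightarrow> c * norm z powr (\<theta> + e) \<le> norm (grad f z)"
  proof (intro allI impI)
    fix z :: "complex^'n" assume "norm z < \<epsilon>'"
    then have "c * norm z powr (\<theta> + e) \<le> c * norm z powr \<theta>"
      using \<open>e > 0\<close> \<open>c > 0\<close> by (intro mult_left_mono powr_mono') (auto simp: \<epsilon>'_def)
    also have "\<dots> \<le> norm (grad f z)" using bound \<open>norm z < \<epsilon>'\<close> by (simp add: \<epsilon>'_def)
    finally show "c * norm z powr (\<theta> + e) \<le> norm (grad f z)" .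
  qed
  moreover have "\<epsilon>' > 0" using \<open>\<epsilon> > 0\<close> by (simp add: \<epsilon>'_def)
  ultimately have "\<exists>c>0. \<exists>\<epsilon>>0. \<forall>z::complex^'n. norm z < \<epsilon> \<longrightarrow> norm (grad f z) \<ge> c * norm z powr (\<theta> + e)"
    using \<open>c > 0\<close> by blast
  then show "loj_exponent f \<le> \<theta> + e"
    unfolding loj_exponent_def using \<open>\<theta> \<ge> 0\<close> \<open>e > 0\<close>
    by (intro cInf_lower) (auto intro: bdd_belowI[of _ 0])
qed

theorem theorem19:
  fixes f :: "('n::finite) cpoly" and r :: "'n \<Rightarrow> real" and d :: real
  assumes "is_poly f"
    and "\<forall>i. r i > 0"
    and "d > 0"
    and "weighted_homogeneous f r d"
    and "nondegenerate f"
    and "loj_nondegenerate f"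
    and "isolated_singularity_origin f"
    and "newton_boundary_dim f = int CARD('n) - 1"
  shows "loj_exponent f \<le> d / Min (range r) - 1"
proof -
  obtain c where "c > 0"
    and "\<forall>z::complex^'n. norm z < 1 \<longrightarrow> c * norm z powr (d / Min (range r) - 1) \<le> norm (grad f z)"
    using grad_lower_bound(2)[OF assms(2,4,7)] by blast
  then show ?thesis
    using loj_exponent_le grad_lower_bound(1)[OF assms(2,4,7)] zero_less_one by blast
qed

end
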